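(* Let $\bm{C}\in\mathbb{R}^{n\times m}$ have i.i.d. entries $\bm{C}_{ij}\sim\mathrm{Unif}(0,1)$ (so that $\mathbb{P}(\mathrm{rk}(\bm{C})<\min\{n,m\})=0$), and let $\bm{a}\in\Delta_n$, $\bm{b}\in\Delta_m$ have strictly positive entries. Then, with probability one, the entrywise exponentials $\exp\{\bm{C}\}$ and $\exp\{-\bm{C}\}$ have full rank $\min\{n,m\}$, and the output $\mathrm{diag}(\bm{u})\,e^{-\bm{C}}\,\mathrm{diag}(\bm{v})$ of the Sinkhorn algorithm $\textit{Sinkhorn}(e^{-\bm{C}},\bm{a},\bm{b})$ has full rank $\min\{n,m\}$.
   Context: The Sinkhorn algorithm with kernel $\bm{K}\in\mathbb{R}_{>0}^{n\times m}$ and marginals $\bm{a},\bm{b}$ starts from $\bm{u}=\bm{1}_n$, $\bm{v}=\bm{1}_m$ and alternates the updates $\bm{u}\gets\bm{a}/(\bm{K}\bm{v})$, $\bm{v}\gets\bm{b}/(\bm{K}^{\mathrm T}\bm{u})$ (entrywise division), returning $\mathrm{diag}(\bm{u})\bm{K}\mathrm{diag}(\bm{v})$. $\Delta_d$ denotes the probability simplex in $\mathbb{R}^d$. *)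

theory Defs
  imports "HOL-Analysis.Analysis" "HOL-Probability.Probability"
begin

definition prob_simplex :: "(real^'d) set" where
  "prob_simplex = {x. (\<forall>i. 0 \<le> x $ i) \<and> (\<Sum>i\<in>UNIV. x $ i) = 1}"

definition diag_mat :: "real^'n \<Rightarrow> real^'n^'n" where
  "diag_mat x = (\<chi> i j. if i = j then x $ i else 0)"

fun sinkhorn_uv :: "real^'m^'n \<Rightarrow> real^'n \<Rightarrow> real^'m \<Rightarrow> nat \<Rightarrow> (real^'n) \<times> (real^'m)" where
  "sinkhorn_uv K a b 0 = ((\<chi> i. 1), (\<chi> j. 1))"
| "sinkhorn_uv K a b (Suc N) =
     (let (u, v) = sinkhorn_uv K a b N;
          u' = (\<chi> i. a $ i / (K *v v) $ i);
          v' = (\<chi> j. b $ j / (transpose K *v u') $ j)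
      in (u', v'))"

definition sinkhorn :: "real^'m^'n \<Rightarrow> real^'n \<Rightarrow> real^'m \<Rightarrow> nat \<Rightarrow> real^'m^'n" where
  "sinkhorn K a b N = (case sinkhorn_uv K a b N of (u, v) \<Rightarrow> diag_mat u ** K ** diag_mat v)"

end

theory Submission
  imports Defs
begin

(* A square minor of a matrix whose entries are distinct independent atomless random variables
   is a multilinear polynomial in them, and its diagonal monomial has coefficient 1.
   Such a polynomial vanishes with probability zero, by induction on the variables: write it as
   z * Q + R with z independent of Q and R and Q almost surely nonzero; then it vanishes only
   where z = - R / Q, a null event because z has no atoms. Applied to a maximal square minor of
   exp C and of exp (- C) this gives full rank almost surely, and the Sinkhorn output
   diag u * exp (- C) * diag v has the same rank as exp (- C) because u and v stay positive. *)

lemma rank_eq_card_rows_if_column_minor: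
  fixes A :: "real^'m^'n" and \<sigma> :: "'n \<Rightarrow> 'm"
  assumes "det (\<chi> i k. A $ i $ \<sigma> k) \<noteq> 0"
  shows "rank A = CARD('n)"
proof -
  define P :: "real^'n^'m" where "P = (\<chi> j k. if j = \<sigma> k then 1 else 0)"
  have "A ** P = (\<chi> i k. A $ i $ \<sigma> k)"
    by (simp add: P_def matrix_matrix_mult_def vec_eq_iff if_distrib[of "\<lambda>t. _ * t"] cong: if_cong)
  then have "rank (A ** P) = CARD('n)"
    using assms rank_bound[of "A ** P"] by (simp add: det_eq_0_rank)
  then show ?thesis
    using rank_mul_le_left[of A P] rank_bound[of A] by simp
qed

lemma rank_eq_card_columns_if_row_minor:
  fixes A :: "real^'m^'n" and \<sigma> :: "'m \<Rightarrow> 'n"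
  assumes "det (\<chi> k j. A $ \<sigma> k $ j) \<noteq> 0"
  shows "rank A = CARD('m)"
proof -
  have "det (\<chi> j k. transpose A $ j $ \<sigma> k) \<noteq> 0"
    using assms det_transpose[of "\<chi> k j. A $ \<sigma> k $ j"] by (simp add: transpose_def)
  then show ?thesis
    using rank_eq_card_rows_if_column_minor rank_transpose by metis
qed

lemma rank_mult_invertible:
  fixes A :: "real^'m^'n" and P :: "real^'n^'n" and Q :: "real^'m^'m"
  assumes "invertible P" "invertible Q"
  shows "rank (P ** A ** Q) = rank A"
proof (rule antisym)
  show "rank (P ** A ** Q) \<le> rank A"
    by (metis rank_mul_le_left rank_mul_le_right order_trans)
  obtain P' Q' where "P' ** P = mat 1" "Q ** Q' = mat 1"
    using assms by (meson invertible_def)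
  then have "A = P' ** (P ** A ** Q) ** Q'"
    by (metis matrix_mul_assoc matrix_mul_lid matrix_mul_rid)
  then show "rank A \<le> rank (P ** A ** Q)"
    by (metis rank_mul_le_left rank_mul_le_right order_trans)
qed

lemma invertible_diag_mat:
  assumes "\<And>i. x $ i \<noteq> 0"
  shows "invertible (diag_mat x)"
  using assms by (simp add: invertible_det_nz det_diagonal diag_mat_def)

lemma matrix_vector_mult_pos:
  fixes L :: "real^'m^'n"
  assumes "\<And>i j. L $ i $ j > 0" "\<And>j. w $ j > 0"
  shows "(L *v w) $ i > 0"
  using assms by (simp add: matrix_vector_mult_def sum_pos)

lemma sinkhorn_uv_pos:
  fixes K :: "real^'m^'n"
  assumes "\<And>i j. K $ i $ j > 0" "\<And>i. a $ i > 0" "\<And>j. b $ j > 0"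
  shows "(\<forall>i. fst (sinkhorn_uv K a b N) $ i > 0) \<and> (\<forall>j. snd (sinkhorn_uv K a b N) $ j > 0)"
proof (induction N)
  case 0
  then show ?case by simp
next
  case (Suc N)
  obtain u v where uv: "sinkhorn_uv K a b N = (u, v)"
    by fastforce
  define u' where "u' = (\<chi> i. a $ i / (K *v v) $ i)"
  have "u' $ i > 0" for i
    using Suc uv assms(1,2) matrix_vector_mult_pos[of K v i] by (simp add: u'_def)
  then have "(transpose K *v u') $ j > 0" for j
    using assms(1) matrix_vector_mult_pos[of "transpose K" u' j] by (simp add: transpose_def)
  with \<open>\<And>i. u' $ i > 0\<close> show ?case
    using uv assms(3) by (simp add: u'_def[symmetric] Let_def)
qed

lemma rank_sinkhorn:
  fixes K :: "real^'m^'n"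
  assumes "\<And>i j. K $ i $ j > 0" "\<And>i. a $ i > 0" "\<And>j. b $ j > 0"
  shows "rank (sinkhorn K a b N) = rank K"
proof -
  obtain u v where uv: "sinkhorn_uv K a b N = (u, v)"
    by fastforce
  with sinkhorn_uv_pos[OF assms, of N] have "\<And>i. u $ i \<noteq> 0" "\<And>j. v $ j \<noteq> 0"
    by (metis fst_conv less_irrefl snd_conv)+
  then show ?thesis
    unfolding sinkhorn_def uv by (simp add: rank_mult_invertible invertible_diag_mat)
qed

lemma (in prob_space) indep_var_AE_neq:
  fixes U Y :: "'a \<Rightarrow> real"
  assumes ind: "indep_var borel U borel Y"
    and atomless: "\<And>c. emeasure M {\<omega>\<in>space M. Y \<omega> = c} = 0"
  shows "AE \<omega> in M. U \<omega> \<noteq> Y \<omega>"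
proof -
  from ind[unfolded indep_var_distribution_eq] have rvU: "random_variable borel U"
    and rvY: "random_variable borel Y"
    and eq: "distr M borel U \<Otimes>\<^sub>M distr M borel Y = distr M (borel \<Otimes>\<^sub>M borel) (\<lambda>x. (U x, Y x))"
    by auto
  define D where "D = {p :: real \<times> real. fst p = snd p}"
  have D: "D \<in> sets (borel \<Otimes>\<^sub>M borel)"
  proof -
    have "{x \<in> space (borel \<Otimes>\<^sub>M borel). fst x = (snd x::real)} \<in> sets (borel \<Otimes>\<^sub>M (borel::real measure))"
      by (intro measurable_equality_set) measurable
    then show ?thesis by (simp add: D_def space_pair_measure)
  qed
  interpret Y: prob_space "distr M borel Y"
    using rvY by (rule prob_space_distr)
  have "emeasure M {\<omega>\<in>space M. U \<omega> = Y \<omega>} = emeasure (distr M (borel \<Otimes>\<^sub>M borel) (\<lambda>x. (U x, Y x))) D"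
    using rvU rvY D by (subst emeasure_distr) (auto simp: D_def intro!: arg_cong[where f="emeasure M"])
  also have "\<dots> = emeasure (distr M borel U \<Otimes>\<^sub>M distr M borel Y) D"
    by (simp add: eq)
  also have "\<dots> = (\<integral>\<^sup>+u. emeasure (distr M borel Y) {u} \<partial>distr M borel U)"
    using D by (simp add: Y.emeasure_pair_measure_alt D_def vimage_def)
  also have "\<dots> = 0"
    using rvY atomless by (simp add: emeasure_distr vimage_def Int_def conj_commute)
  finally show ?thesis
    using rvU rvY by (subst AE_iff_measurable[OF _ refl]) (auto intro: measurable_equality_set)
qed

definition multilinear_poly :: "'v set \<Rightarrow> ('v set \<Rightarrow> real) \<Rightarrow> ('v \<Rightarrow> real) \<Rightarrow> real" where
  "multilinear_poly V c z = (\<Sum>T\<in>Pow V. c T * prod z T)"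

lemma multilinear_poly_cong:
  "(\<And>v. v \<in> V \<Longrightarrow> z v = z' v) \<Longrightarrow> multilinear_poly V c z = multilinear_poly V c z'"
  unfolding multilinear_poly_def by (intro sum.cong refl arg_cong2[where f="(*)"] prod.cong) auto

lemma multilinear_poly_insert:
  assumes "finite V" "v \<notin> V"
  shows "multilinear_poly (insert v V) c z
           = z v * multilinear_poly V (\<lambda>T. c (insert v T)) z + multilinear_poly V c z"
proof -
  have disj: "Pow V \<inter> insert v ` Pow V = {}"
    using assms(2) by auto
  have inj: "inj_on (insert v) (Pow V)"
    using assms(2) unfolding inj_on_def by (metis PowD insert_ident subsetD)
  have "multilinear_poly (insert v V) c z
          = (\<Sum>T\<in>Pow V. c T * prod z T) + (\<Sum>T\<in>Pow V. c (insert v T) * prod z (insert v T))"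
    unfolding multilinear_poly_def Pow_insert
    using assms(1) disj by (simp add: sum.union_disjoint sum.reindex[OF inj])
  also have "(\<Sum>T\<in>Pow V. c (insert v T) * prod z (insert v T)) = (\<Sum>T\<in>Pow V. z v * (c (insert v T) * prod z T))"
    using assms by (intro sum.cong refl) (auto simp: finite_subset prod.insert_if)
  finally show ?thesis
    by (simp add: multilinear_poly_def sum_distrib_left)
qed

lemma borel_measurable_multilinear_poly:
  assumes "finite V"
  shows "multilinear_poly V c \<in> borel_measurable (PiM V (\<lambda>_. borel))"
  unfolding multilinear_poly_def
proof (intro borel_measurable_sum borel_measurable_times borel_measurable_const borel_measurable_prod)
  fix T i assume "T \<in> Pow V" "i \<in> T"
  then show "(\<lambda>x. x i) \<in> borel_measurable (PiM V (\<lambda>_. borel))"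
    by (intro measurable_component_singleton) auto
qed

lemma (in prob_space) AE_affine_in_fresh_variable_nonzero:
  fixes Z :: "'v \<Rightarrow> 'a \<Rightarrow> real"
  assumes V: "finite V" "v \<notin> V" and ind: "indep_vars (\<lambda>_. borel) Z (insert v V)"
    and atomless: "\<And>c. emeasure M {\<omega>\<in>space M. Z v \<omega> = c} = 0"
    and nonzero: "AE \<omega> in M. multilinear_poly V c1 (\<lambda>u. Z u \<omega>) \<noteq> 0"
  shows "AE \<omega> in M. Z v \<omega> * multilinear_poly V c1 (\<lambda>u. Z u \<omega>) + multilinear_poly V c0 (\<lambda>u. Z u \<omega>) \<noteq> 0"
proof -
  define h where "h = (\<lambda>w. - multilinear_poly V c0 w / multilinear_poly V c1 w)"
  have "h \<in> borel_measurable (PiM V (\<lambda>_. borel))"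
    unfolding h_def using borel_measurable_multilinear_poly[OF V(1)] by measurable
  then have "indep_var borel (h \<circ> (\<lambda>\<omega>. restrict (\<lambda>u. Z u \<omega>) V))
               borel ((\<lambda>f. f v) \<circ> (\<lambda>\<omega>. restrict (\<lambda>u. Z u \<omega>) {v}))"
    using V by (intro indep_var_compose[OF indep_var_restrict[OF ind]])
      (auto intro: measurable_component_singleton)
  moreover have "h \<circ> (\<lambda>\<omega>. restrict (\<lambda>u. Z u \<omega>) V)
                   = (\<lambda>\<omega>. - multilinear_poly V c0 (\<lambda>u. Z u \<omega>) / multilinear_poly V c1 (\<lambda>u. Z u \<omega>))"
    unfolding h_def comp_def
    by (intro ext arg_cong2[where f="(/)"] arg_cong[where f=uminus] multilinear_poly_cong) auto
  moreover have "(\<lambda>f. f v) \<circ> (\<lambda>\<omega>. restrict (\<lambda>u. Z u \<omega>) {v}) = Z v"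
    by auto
  ultimately have "AE \<omega> in M. - multilinear_poly V c0 (\<lambda>u. Z u \<omega>) / multilinear_poly V c1 (\<lambda>u. Z u \<omega>) \<noteq> Z v \<omega>"
    using indep_var_AE_neq atomless by simp
  with nonzero show ?thesis
    by eventually_elim (auto simp: field_simps)
qed

lemma (in prob_space) AE_multilinear_poly_nonzero:
  fixes Z :: "'v \<Rightarrow> 'a \<Rightarrow> real"
  assumes "finite V" "indep_vars (\<lambda>_. borel) Z V"
    and "\<And>v c. v \<in> V \<Longrightarrow> emeasure M {\<omega>\<in>space M. Z v \<omega> = c} = 0"
    and "T \<subseteq> V" "c T \<noteq> 0"
  shows "AE \<omega> in M. multilinear_poly V c (\<lambda>u. Z u \<omega>) \<noteq> 0"
  using assms
proof (induction V arbitrary: c T rule: finite_induct)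
  case empty
  then show ?case by (simp add: multilinear_poly_def)
next
  case (insert v V)
  have indV: "indep_vars (\<lambda>_. borel) Z V"
    using insert.prems(1) by (rule indep_vars_subset) auto
  define c1 where "c1 = (\<lambda>T. c (insert v T))"
  have split: "multilinear_poly (insert v V) c (\<lambda>u. Z u \<omega>)
       = Z v \<omega> * multilinear_poly V c1 (\<lambda>u. Z u \<omega>) + multilinear_poly V c (\<lambda>u. Z u \<omega>)" for \<omega>
    unfolding c1_def by (rule multilinear_poly_insert[OF insert.hyps])
  show ?case
  proof (cases "\<exists>T1\<subseteq>V. c1 T1 \<noteq> 0")
    case True
    then obtain T1 where "T1 \<subseteq> V" "c1 T1 \<noteq> 0"
      by blast
    then have "AE \<omega> in M. multilinear_poly V c1 (\<lambda>u. Z u \<omega>) \<noteq> 0"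
      using insert.IH[OF indV] insert.prems(2) by blast
    then show ?thesis
      unfolding split using insert.hyps insert.prems
      by (intro AE_affine_in_fresh_variable_nonzero) auto
  next
    case False
    then have "multilinear_poly V c1 z = 0" for z
      by (simp add: multilinear_poly_def)
    have "T \<subseteq> V"
    proof (rule ccontr)
      assume "\<not> T \<subseteq> V"
      then have "c1 (T - {v}) = c T" "T - {v} \<subseteq> V"
        using insert.prems(3) by (auto simp: c1_def insert_absorb)
      with False insert.prems(4) show False
        by auto
    qed
    then have "AE \<omega> in M. multilinear_poly V c (\<lambda>u. Z u \<omega>) \<noteq> 0"
      using insert.IH[OF indV] insert.prems(2,4) by blast
    then show ?thesis
      unfolding split \<open>\<And>z. multilinear_poly V c1 z = 0\<close> by simp
  qed
qed

definition det_coeff :: "('k::finite \<times> 'k \<Rightarrow> 'v) \<Rightarrow> 'v set \<Rightarrow> real" where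
  "det_coeff e T = (\<Sum>p | p permutes (UNIV::'k set) \<and> range (\<lambda>i. e (i, p i)) = T. of_int (sign p))"

lemma det_eq_multilinear_poly:
  fixes e :: "'k::finite \<times> 'k \<Rightarrow> 'v::finite"
  assumes "inj e"
  shows "det (\<chi> i j. z (e (i, j)) :: real^'k^'k) = multilinear_poly UNIV (det_coeff e) z"
proof -
  let ?P = "{p. p permutes (UNIV::'k set)}"
  let ?G = "\<lambda>p. range (\<lambda>i. e (i, p i))"
  have "multilinear_poly UNIV (det_coeff e) z
          = (\<Sum>T\<in>Pow UNIV. \<Sum>p\<in>{p \<in> ?P. ?G p = T}. of_int (sign p) * prod z (?G p))"
    unfolding multilinear_poly_def det_coeff_def by (simp add: sum_distrib_right)
  also have "\<dots> = (\<Sum>p\<in>?P. of_int (sign p) * prod z (?G p))"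
    by (rule sum.group) (auto simp: finite_permutations)
  also have "\<dots> = (\<Sum>p\<in>?P. of_int (sign p) * (\<Prod>i\<in>UNIV. z (e (i, p i))))"
  proof (rule sum.cong[OF refl])
    fix p
    have "inj (\<lambda>i. e (i, p i))"
      using assms unfolding inj_def by auto
    then show "of_int (sign p) * prod z (?G p) = of_int (sign p) * (\<Prod>i\<in>UNIV. z (e (i, p i)))"
      by (simp add: prod.reindex)
  qed
  finally show ?thesis
    by (simp add: det_def)
qed

lemma det_coeff_diagonal:
  fixes e :: "'k::finite \<times> 'k \<Rightarrow> 'v"
  assumes "inj e"
  shows "det_coeff e (range (\<lambda>i. e (i, i))) = 1"
proof -
  have "{p. p permutes (UNIV::'k set) \<and> range (\<lambda>i. e (i, p i)) = range (\<lambda>i. e (i, i))} = {id}"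
  proof safe
    fix p :: "'k \<Rightarrow> 'k"
    assume "range (\<lambda>i. e (i, p i)) = range (\<lambda>i. e (i, i))"
    then have "\<exists>i'. e (i, p i) = e (i', i')" for i
      by (metis (mono_tags, lifting) rangeE rangeI)
    then show "p = id"
      using assms by (fastforce simp: fun_eq_iff dest: injD)
  qed (auto simp: permutes_id)
  then show ?thesis
    by (simp add: det_coeff_def sign_id)
qed

lemma (in prob_space) AE_det_nonzero:
  fixes Z :: "'v::finite \<Rightarrow> 'a \<Rightarrow> real" and e :: "'k::finite \<times> 'k \<Rightarrow> 'v"
  assumes "inj e" "indep_vars (\<lambda>_. borel) Z UNIV"
    and "\<And>v c. emeasure M {\<omega>\<in>space M. Z v \<omega> = c} = 0"
  shows "AE \<omega> in M. det (\<chi> i j. Z (e (i, j)) \<omega> :: real^'k^'k) \<noteq> 0"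
proof -
  have "AE \<omega> in M. multilinear_poly UNIV (det_coeff e) (\<lambda>v. Z v \<omega>) \<noteq> 0"
    by (rule AE_multilinear_poly_nonzero[where T="range (\<lambda>i. e (i, i))"])
      (use assms det_coeff_diagonal[OF assms(1)] in auto)
  then show ?thesis
  proof eventually_elim
    case (elim \<omega>)
    then show ?case
      by (simp add: det_eq_multilinear_poly[OF assms(1), of "\<lambda>v. Z v \<omega>"])
  qed
qed

lemma (in prob_space) AE_rank_eq_min:
  fixes Z :: "'n::finite \<times> 'm::finite \<Rightarrow> 'a \<Rightarrow> real"
  assumes "indep_vars (\<lambda>_. borel) Z UNIV"
    and "\<And>p c. emeasure M {\<omega>\<in>space M. Z p \<omega> = c} = 0"
  shows "AE \<omega> in M. rank (\<chi> i j. Z (i, j) \<omega> :: real^'m^'n) = min CARD('n) CARD('m)"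
proof (cases "CARD('n) \<le> CARD('m)")
  case True
  then obtain \<sigma> :: "'n \<Rightarrow> 'm" where "inj \<sigma>"
    using card_le_inj[of "UNIV::'n set" "UNIV::'m set"] by auto
  then have "inj (\<lambda>(i, k). (i, \<sigma> k))"
    by (auto simp: inj_def)
  from AE_det_nonzero[OF this assms] show ?thesis
  proof eventually_elim
    case (elim \<omega>)
    with rank_eq_card_rows_if_column_minor[of "\<chi> i j. Z (i, j) \<omega>" \<sigma>] True show ?case
      by (simp add: min_def)
  qed
next
  case False
  then obtain \<sigma> :: "'m \<Rightarrow> 'n" where "inj \<sigma>"
    using card_le_inj[of "UNIV::'m set" "UNIV::'n set"] by auto
  then have "inj (\<lambda>(k, j). (\<sigma> k, j))"
    by (auto simp: inj_def)
  from AE_det_nonzero[OF this assms] show ?thesis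
  proof eventually_elim
    case (elim \<omega>)
    with rank_eq_card_columns_if_row_minor[of "\<chi> i j. Z (i, j) \<omega>" \<sigma>] False show ?case
      by (simp add: min_def)
  qed
qed

lemma emeasure_level_set_eq_0_if_uniform:
  assumes "X \<in> borel_measurable M" "distr M lborel X = uniform_measure lborel S" "S \<in> sets borel"
  shows "emeasure M {\<omega>\<in>space M. X \<omega> = c} = 0"
proof -
  have "emeasure M {\<omega>\<in>space M. X \<omega> = c} = emeasure (distr M lborel X) {c}"
    using assms(1) by (subst emeasure_distr) (auto intro!: arg_cong[where f="emeasure M"])
  also have "\<dots> = emeasure lborel (S \<inter> {c}) / emeasure lborel S"
    using assms(2,3) by simp
  also have "emeasure lborel (S \<inter> {c}) = 0"
    using emeasure_mono[of "S \<inter> {c}" "{c}" lborel] by simp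
  finally show ?thesis
    by simp
qed

lemma emeasure_level_set_inj_comp:
  assumes "inj f" "\<And>c. emeasure M {\<omega>\<in>space M. X \<omega> = c} = 0"
  shows "emeasure M {\<omega>\<in>space M. f (X \<omega>) = c} = 0"
proof (cases "c \<in> range f")
  case True
  then obtain x where "c = f x"
    by blast
  with assms show ?thesis
    by (simp add: inj_eq)
next
  case False
  then have "{\<omega>\<in>space M. f (X \<omega>) = c} = {}"
    by auto
  then show ?thesis
    by (metis emeasure_empty)
qed

theorem proposition7:
  fixes M :: "'s measure"
    and X :: "('n::finite \<times> 'm::finite) \<Rightarrow> 's \<Rightarrow> real"
    and a :: "real^'n" and b :: "real^'m"
  assumes "prob_space M"
    and "prob_space.indep_vars M (\<lambda>_. borel) X UNIV"
    and "\<And>p. X p \<in> borel_measurable M"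
    and "\<And>p. distr M lborel (X p) = uniform_measure lborel {0<..<1}"
    and "a \<in> prob_simplex" and "\<And>i. a $ i > 0"
    and "b \<in> prob_simplex" and "\<And>j. b $ j > 0"
  shows "AE \<omega> in M.
           rank (\<chi> i j. exp (X (i, j) \<omega>) :: real^'m^'n) = min CARD('n) CARD('m)
         \<and> rank (\<chi> i j. exp (- X (i, j) \<omega>) :: real^'m^'n) = min CARD('n) CARD('m)
         \<and> (\<forall>N. rank (sinkhorn (\<chi> i j. exp (- X (i, j) \<omega>)) a b N) = min CARD('n) CARD('m))"
proof -
  interpret prob_space M
    by (rule assms(1))
  have atomless: "emeasure M {\<omega>\<in>space M. X p \<omega> = c} = 0" for p c
    using assms(3,4) by (rule emeasure_level_set_eq_0_if_uniform) simp
  have full_rank: "AE \<omega> in M. rank (\<chi> i j. f (X (i, j) \<omega>) :: real^'m^'n) = min CARD('n) CARD('m)"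
    if "inj f" "f \<in> borel_measurable borel" for f
    using indep_vars_compose2[OF assms(2)] emeasure_level_set_inj_comp[OF that(1) atomless] that(2)
    by (intro AE_rank_eq_min) auto
  have "AE \<omega> in M. rank (\<chi> i j. exp (X (i, j) \<omega>) :: real^'m^'n) = min CARD('n) CARD('m)"
    "AE \<omega> in M. rank (\<chi> i j. exp (- X (i, j) \<omega>) :: real^'m^'n) = min CARD('n) CARD('m)"
    by (rule full_rank, auto simp: inj_def)+
  then show ?thesis
  proof eventually_elim
    case (elim \<omega>)
    moreover have "rank (sinkhorn (\<chi> i j. exp (- X (i, j) \<omega>)) a b N) = rank (\<chi> i j. exp (- X (i, j) \<omega>) :: real^'m^'n)" for N
      using assms(6,8) by (intro rank_sinkhorn) auto
    ultimately show ?case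
      by simp
  qed
qed

end
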